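(* Fix $\varepsilon>0$ and $\gamma\in(0,1)$, and let $d_N=(1-\gamma)\sqrt{\frac{\log N}{2\log\log N}}$. Let $n\in\mathbb{N}$, $G=\mathbb{Z}_2^n$ and $N=2^n=|G|$, and let $d$ be an integer with $2\leqslant d\leqslant d_N$. If $\Gamma\in\mathcal{G}(G,p)$ with $p\leqslant\sqrt[d]{d!(1-\varepsilon)\frac{\log N}{N^{d-1}}}$, then with high probability the diameter of $\Gamma$ is greater than $d$; that is, $\Pr(\operatorname{diam}(\Gamma)\leqslant d)\to0$ as $n\to\infty$, uniformly over all such $d$ and $p$.
   Context: For a group $G$ and a subset $S\subseteq G$, the (undirected) Cayley graph $\Gamma(G;S)$ has vertex set $G$ and an edge between $g\neq h$ iff $g^{-1}h\in S$ or $h^{-1}g\in S$ (loops and multiple edges ignored). The model $\mathcal{G}(G,p)$ is the probability space of Cayley graphs $\Gamma(G;S)$ where each element of $G$ is put in $S$ independently with probability $p$. The diameter of a disconnected graph is infinite. *)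

theory Defs
  imports Complex_Main "HOL-Algebra.Group"
begin

text \<open>The group Z_2^n, realised as the subsets of {0..<n} under symmetric difference
  (a subset corresponds to its indicator vector in Z_2^n).\<close>
definition Z2n :: "nat \<Rightarrow> nat set monoid" where
  "Z2n n = \<lparr>carrier = Pow {..<n}, mult = (\<lambda>A B. (A - B) \<union> (B - A)), one = {}\<rparr>"

definition cayley_edges :: "('a, 'b) monoid_scheme \<Rightarrow> 'a set \<Rightarrow> ('a \<times> 'a) set" where
  "cayley_edges G S = {(g, h). g \<in> carrier G \<and> h \<in> carrier G \<and> g \<noteq> h \<and>
      (inv\<^bsub>G\<^esub> g \<otimes>\<^bsub>G\<^esub> h \<in> S \<or> inv\<^bsub>G\<^esub> h \<otimes>\<^bsub>G\<^esub> g \<in> S)}"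

text \<open>diam(Gamma(G;S)) \<le> d: every two vertices are joined by a walk of length at most d
  (a disconnected graph has infinite diameter, so this fails then).\<close>
definition cayley_diam_le :: "('a, 'b) monoid_scheme \<Rightarrow> 'a set \<Rightarrow> nat \<Rightarrow> bool" where
  "cayley_diam_le G S d \<longleftrightarrow>
     (\<forall>g\<in>carrier G. \<forall>h\<in>carrier G. \<exists>k\<le>d. (g, h) \<in> (cayley_edges G S) ^^ k)"

definition cayley_model_prob :: "('a, 'b) monoid_scheme \<Rightarrow> real \<Rightarrow> ('a set \<Rightarrow> bool) \<Rightarrow> real" where
  "cayley_model_prob G p P =
     (\<Sum>S\<in>{S. S \<subseteq> carrier G \<and> P S}. p ^ card S * (1 - p) ^ (card (carrier G) - card S))"

end

theory Submission
  imports Defs "HOL-Real_Asymp.Real_Asymp"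
begin

text \<open>
  If the Cayley graph has diameter at most \<open>d\<close>, every nonzero \<open>g\<close> is the sum of at most \<open>d\<close>
  elements of \<open>S\<close>. An element has at most \<open>N ^ (k - 1) / k!\<close> representations as a sum of \<open>k\<close>
  distinct elements, so for the given \<open>p\<close> the expected number of its short representations
  inside \<open>S\<close> is at most \<open>(1 - \<epsilon>) log N\<close> plus a vanishing contribution of those with
  fewer than \<open>d\<close> terms. By the Harris
  inequality a fixed \<open>g\<close> has no short representation with probability at least about
  \<open>N powr (\<epsilon> - 1)\<close>, so the expected number of such \<open>g\<close> is at least about \<open>N powr \<epsilon> / 2\<close>.
  Janson's inequality shows that these events are asymptotically pairwise independent: the
  bound on \<open>d\<close> makes the overlap term at most \<open>L\<^sup>2 exp (- sqrt L)\<close> with \<open>L = log N\<close>.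
  Hence the number \<open>X\<close> of such \<open>g\<close> has \<open>Var X = o((E X)\<^sup>2)\<close>, and the second moment
  method gives \<open>Pr (X = 0) \<rightarrow> 0\<close>.
\<close>

section \<open>Binomial random subsets\<close>

definition subset_expectation :: "real \<Rightarrow> 'a set \<Rightarrow> ('a set \<Rightarrow> real) \<Rightarrow> real" where
  "subset_expectation p V f = (\<Sum>S\<in>Pow V. p ^ card S * (1 - p) ^ (card V - card S) * f S)"

abbreviation subset_prob :: "real \<Rightarrow> 'a set \<Rightarrow> ('a set \<Rightarrow> bool) \<Rightarrow> real" where
  "subset_prob p V P \<equiv> subset_expectation p V (\<lambda>S. of_bool (P S))"

lemma subset_expectation_empty [simp]: "subset_expectation p {} f = f {}"
  by (simp add: subset_expectation_def)

lemma subset_expectation_insert: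
  assumes "finite V" "v \<notin> V"
  shows "subset_expectation p (insert v V) f
    = (1 - p) * subset_expectation p V f + p * subset_expectation p V (\<lambda>S. f (insert v S))"
proof -
  have card_V: "card (insert v V) = Suc (card V)"
    using assms by simp
  have weight_out: "p ^ card S * (1 - p) ^ (card (insert v V) - card S)
      = (1 - p) * (p ^ card S * (1 - p) ^ (card V - card S))" if "S \<subseteq> V" for S
    using that assms card_mono[of V S] by (simp add: card_V Suc_diff_le)
  have weight_in: "p ^ card (insert v S) * (1 - p) ^ (card (insert v V) - card (insert v S))
      = p * (p ^ card S * (1 - p) ^ (card V - card S))" if "S \<subseteq> V" for S
  proof -
    have "finite S" "v \<notin> S"
      using that assms finite_subset[of S V] by auto
    then show ?thesis by (simp add: card_V)
  qed
  have inj: "inj_on (insert v) (Pow V)"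
    using assms(2) by (intro inj_onI) (metis PowD insert_ident subset_iff)
  have "subset_expectation p (insert v V) f
      = (\<Sum>S\<in>Pow V. p ^ card S * (1 - p) ^ (card (insert v V) - card S) * f S)
      + (\<Sum>S\<in>insert v ` Pow V. p ^ card S * (1 - p) ^ (card (insert v V) - card S) * f S)"
    unfolding subset_expectation_def Pow_insert
    using assms by (intro sum.union_disjoint) auto
  also have "(\<Sum>S\<in>insert v ` Pow V. p ^ card S * (1 - p) ^ (card (insert v V) - card S) * f S)
      = p * subset_expectation p V (\<lambda>S. f (insert v S))"
    unfolding sum.reindex[OF inj] subset_expectation_def sum_distrib_left
    by (intro sum.cong) (auto simp: weight_in)
  also have "(\<Sum>S\<in>Pow V. p ^ card S * (1 - p) ^ (card (insert v V) - card S) * f S)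
      = (1 - p) * subset_expectation p V f"
    unfolding subset_expectation_def sum_distrib_left
    by (intro sum.cong) (auto simp: weight_out)
  finally show ?thesis .
qed

lemma subset_expectation_const: "finite V \<Longrightarrow> subset_expectation p V (\<lambda>_. c) = c"
  by (induction V rule: finite_induct) (simp_all add: subset_expectation_insert algebra_simps)

lemma subset_expectation_cong:
  "(\<And>S. S \<subseteq> V \<Longrightarrow> f S = g S) \<Longrightarrow> subset_expectation p V f = subset_expectation p V g"
  unfolding subset_expectation_def by (rule sum.cong) auto

lemma subset_expectation_add:
  "subset_expectation p V (\<lambda>S. f S + g S) = subset_expectation p V f + subset_expectation p V g"
  unfolding subset_expectation_def by (simp add: distrib_left sum.distrib)

lemma subset_expectation_diff:
  "subset_expectation p V (\<lambda>S. f S - g S) = subset_expectation p V f - subset_expectation p V g"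
  unfolding subset_expectation_def by (simp add: right_diff_distrib sum_subtractf)

lemma subset_expectation_mult_left:
  "subset_expectation p V (\<lambda>S. c * f S) = c * subset_expectation p V f"
  unfolding subset_expectation_def sum_distrib_left by (rule sum.cong) (auto simp: ac_simps)

lemma subset_expectation_mult_right:
  "subset_expectation p V (\<lambda>S. f S * c) = subset_expectation p V f * c"
  unfolding subset_expectation_def sum_distrib_right by (rule sum.cong) (auto simp: ac_simps)

lemma subset_expectation_uminus:
  "subset_expectation p V (\<lambda>S. - f S) = - subset_expectation p V f"
  unfolding subset_expectation_def by (simp add: sum_negf)

lemma subset_expectation_sum:
  "subset_expectation p V (\<lambda>S. \<Sum>i\<in>I. f i S) = (\<Sum>i\<in>I. subset_expectation p V (f i))"
  unfolding subset_expectation_def by (simp add: sum_distrib_left sum.swap[of _ I])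

lemma subset_expectation_mono:
  assumes "0 \<le> p" "p \<le> 1" "\<And>S. S \<subseteq> V \<Longrightarrow> f S \<le> g S"
  shows "subset_expectation p V f \<le> subset_expectation p V g"
  unfolding subset_expectation_def using assms by (intro sum_mono mult_left_mono) auto

lemma subset_expectation_nonneg:
  assumes "0 \<le> p" "p \<le> 1" "\<And>S. S \<subseteq> V \<Longrightarrow> 0 \<le> f S"
  shows "0 \<le> subset_expectation p V f"
  unfolding subset_expectation_def using assms by (intro sum_nonneg mult_nonneg_nonneg) auto

lemma subset_expectation_Un:
  assumes "finite A" "finite B" "A \<inter> B = {}"
  shows "subset_expectation p (A \<union> B) f
    = subset_expectation p A (\<lambda>S. subset_expectation p B (\<lambda>T. f (S \<union> T)))"
  using assms
proof (induction A arbitrary: f rule: finite_induct)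
  case empty
  then show ?case by simp
next
  case (insert a A)
  have "subset_expectation p (insert a A \<union> B) f
      = (1 - p) * subset_expectation p (A \<union> B) f
        + p * subset_expectation p (A \<union> B) (\<lambda>S. f (insert a S))"
    using insert by (simp add: subset_expectation_insert)
  also have "\<dots> = subset_expectation p (insert a A) (\<lambda>S. subset_expectation p B (\<lambda>T. f (S \<union> T)))"
    using insert by (simp add: subset_expectation_insert)
  finally show ?case .
qed

lemma subset_expectation_eq_self:
  assumes "finite A"
  shows "subset_expectation p A (\<lambda>S. of_bool (S = A) * c) = p ^ card A * c"
proof -
  have "subset_expectation p A (\<lambda>S. of_bool (S = A) * c)
      = (\<Sum>S\<in>Pow A. if S = A then p ^ card A * c else 0)"
    unfolding subset_expectation_def by (rule sum.cong) auto
  then show ?thesis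
    using assms by simp
qed

lemma subset_expectation_contains_mult:
  assumes "finite V" "A \<subseteq> V" "\<And>S. S \<subseteq> V \<Longrightarrow> h S = h (S - A)"
  shows "subset_expectation p V (\<lambda>S. of_bool (A \<subseteq> S) * h S) = p ^ card A * subset_expectation p V h"
proof -
  have fin: "finite A" "finite (V - A)"
    using assms finite_subset by auto
  have split: "subset_expectation p V F
      = subset_expectation p A (\<lambda>S. subset_expectation p (V - A) (\<lambda>T. F (S \<union> T)))" for F
    using subset_expectation_Un[OF fin, of p F] assms(2) by (simp add: Un_absorb1)
  have h: "h (S \<union> T) = h T" if "S \<subseteq> A" "T \<subseteq> V - A" for S T
  proof -
    have "S \<union> T - A = T"
      using that by blast
    then show ?thesis
      using assms(2) assms(3)[of "S \<union> T"] that by auto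
  qed
  have contains: "A \<subseteq> S \<union> T \<longleftrightarrow> S = A" if "S \<subseteq> A" "T \<subseteq> V - A" for S T
    using that by blast
  have "subset_expectation p V (\<lambda>S. of_bool (A \<subseteq> S) * h S)
      = subset_expectation p A (\<lambda>S. of_bool (S = A) * subset_expectation p (V - A) h)"
    unfolding split[of "\<lambda>S. of_bool (A \<subseteq> S) * h S"]
  proof (rule subset_expectation_cong)
    fix S assume "S \<subseteq> A"
    then have "subset_expectation p (V - A) (\<lambda>T. of_bool (A \<subseteq> S \<union> T) * h (S \<union> T))
        = subset_expectation p (V - A) (\<lambda>T. of_bool (S = A) * h T)"
      by (intro subset_expectation_cong) (simp add: h contains)
    then show "subset_expectation p (V - A) (\<lambda>T. of_bool (A \<subseteq> S \<union> T) * h (S \<union> T))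
        = of_bool (S = A) * subset_expectation p (V - A) h"
      by (simp add: subset_expectation_mult_left)
  qed
  also have "\<dots> = p ^ card A * subset_expectation p (V - A) h"
    by (rule subset_expectation_eq_self[OF fin(1)])
  also have "subset_expectation p (V - A) h = subset_expectation p V h"
  proof -
    have "subset_expectation p A (\<lambda>S. subset_expectation p (V - A) (\<lambda>T. h (S \<union> T)))
        = subset_expectation p A (\<lambda>_. subset_expectation p (V - A) h)"
      by (intro subset_expectation_cong) (simp add: h)
    then show ?thesis
      unfolding split[of h] by (simp add: subset_expectation_const fin)
  qed
  finally show ?thesis .
qed

lemma subset_prob_contains:
  "finite V \<Longrightarrow> A \<subseteq> V \<Longrightarrow> subset_prob p V (\<lambda>S. A \<subseteq> S) = p ^ card A"
  using subset_expectation_contains_mult[of V A "\<lambda>_. 1" p] by (simp add: subset_expectation_const)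

subsection \<open>The Harris inequality\<close>

theorem harris_inequality:
  assumes "finite V" "0 \<le> p" "p \<le> 1" "mono_on (Pow V) f" "mono_on (Pow V) g"
  shows "subset_expectation p V f * subset_expectation p V g
    \<le> subset_expectation p V (\<lambda>S. f S * g S)"
  using assms
proof (induction V arbitrary: f g rule: finite_induct)
  case empty
  then show ?case by simp
next
  case (insert v V)
  define f1 where "f1 = (\<lambda>S. f (insert v S))"
  define g1 where "g1 = (\<lambda>S. g (insert v S))"
  have mono_on_V: "mono_on (Pow V) h" if "mono_on (Pow (insert v V)) h" for h :: "'a set \<Rightarrow> real"
    using that by (rule mono_on_subset) auto
  have mono_on_insert: "mono_on (Pow V) (\<lambda>S. h (insert v S))"
    if "mono_on (Pow (insert v V)) h" for h :: "'a set \<Rightarrow> real"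
  proof (rule monotone_onI)
    fix S T assume "S \<in> Pow V" "T \<in> Pow V" "S \<subseteq> T"
    then show "h (insert v S) \<le> h (insert v T)"
      by (intro monotone_onD[OF that]) auto
  qed
  have le_insert: "subset_expectation p V h \<le> subset_expectation p V (\<lambda>S. h (insert v S))"
    if "mono_on (Pow (insert v V)) h" for h :: "'a set \<Rightarrow> real"
  proof (rule subset_expectation_mono)
    fix S assume "S \<subseteq> V"
    then show "h S \<le> h (insert v S)"
      by (intro monotone_onD[OF that]) auto
  qed (use insert.prems in auto)
  define F0 where "F0 = subset_expectation p V f"
  define G0 where "G0 = subset_expectation p V g"
  define F1 where "F1 = subset_expectation p V f1"
  define G1 where "G1 = subset_expectation p V g1"
  have "0 \<le> p * (1 - p) * ((F1 - F0) * (G1 - G0))"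
    using insert.prems le_insert[of f] le_insert[of g]
    unfolding F0_def G0_def F1_def G1_def f1_def g1_def by (intro mult_nonneg_nonneg) auto
  \<comment> \<open>Chebyshev's sum inequality for the two-point distribution of \<open>v \<in> S\<close>.\<close>
  then have "((1 - p) * F0 + p * F1) * ((1 - p) * G0 + p * G1) \<le> (1 - p) * (F0 * G0) + p * (F1 * G1)"
    by (simp add: algebra_simps)
  also have "\<dots> \<le> (1 - p) * subset_expectation p V (\<lambda>S. f S * g S)
      + p * subset_expectation p V (\<lambda>S. f1 S * g1 S)"
    using insert.IH[of f g] insert.IH[of f1 g1] insert.prems mono_on_V mono_on_insert
    unfolding F0_def G0_def F1_def G1_def f1_def g1_def by (intro add_mono mult_left_mono) auto
  finally show ?case
    using insert.hyps by (simp add: subset_expectation_insert F0_def G0_def F1_def G1_def f1_def g1_def)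
qed

corollary harris_inequality_antimono:
  assumes "finite V" "0 \<le> p" "p \<le> 1" "antimono_on (Pow V) f" "antimono_on (Pow V) g"
  shows "subset_expectation p V f * subset_expectation p V g
    \<le> subset_expectation p V (\<lambda>S. f S * g S)"
  using harris_inequality[OF assms(1-3), of "\<lambda>S. - f S" "\<lambda>S. - g S"] assms(4,5)
  by (simp add: subset_expectation_uminus monotone_on_def)

corollary harris_inequality_mixed:
  assumes "finite V" "0 \<le> p" "p \<le> 1" "mono_on (Pow V) f" "antimono_on (Pow V) g"
  shows "subset_expectation p V (\<lambda>S. f S * g S)
    \<le> subset_expectation p V f * subset_expectation p V g"
  using harris_inequality[OF assms(1-4), of "\<lambda>S. - g S"] assms(5)
  by (simp add: subset_expectation_uminus monotone_on_def)

lemma subset_prob_avoids_ge_prod: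
  assumes "finite V" "0 \<le> p" "p \<le> 1" "finite F" "F \<subseteq> Pow V"
  shows "(\<Prod>A\<in>F. 1 - p ^ card A) \<le> subset_prob p V (\<lambda>S. \<forall>A\<in>F. \<not> A \<subseteq> S)"
  using assms(4,5)
proof (induction F rule: finite_induct)
  case empty
  then show ?case using assms by (simp add: subset_expectation_const)
next
  case (insert B F)
  have "1 - p ^ card B = subset_prob p V (\<lambda>S. \<not> B \<subseteq> S)"
    using subset_prob_contains[of V B p] insert.prems assms(1)
    by (simp add: of_bool_not_iff subset_expectation_diff subset_expectation_const)
  then have "(1 - p ^ card B) * subset_prob p V (\<lambda>S. \<forall>A\<in>F. \<not> A \<subseteq> S)
      \<le> subset_expectation p V (\<lambda>S. of_bool (\<not> B \<subseteq> S) * of_bool (\<forall>A\<in>F. \<not> A \<subseteq> S))"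
    by (simp only:) (intro harris_inequality_antimono assms; auto intro!: monotone_onI; blast)
  also have "\<dots> = subset_prob p V (\<lambda>S. \<forall>A\<in>insert B F. \<not> A \<subseteq> S)"
    by (intro subset_expectation_cong) simp
  finally have "(1 - p ^ card B) * subset_prob p V (\<lambda>S. \<forall>A\<in>F. \<not> A \<subseteq> S)
      \<le> subset_prob p V (\<lambda>S. \<forall>A\<in>insert B F. \<not> A \<subseteq> S)" .
  moreover have "0 \<le> 1 - p ^ card B"
    using assms by (simp add: power_le_one)
  ultimately show ?case
    using insert by (auto intro: order_trans[OF mult_left_mono])
qed

subsection \<open>Janson's inequality\<close>

definition janson_mu :: "real \<Rightarrow> 'a set set \<Rightarrow> real" where
  "janson_mu p F = (\<Sum>A\<in>F. p ^ card A)"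

definition janson_Delta :: "real \<Rightarrow> 'a set set \<Rightarrow> real" where
  "janson_Delta p F = (\<Sum>A\<in>F. \<Sum>B\<in>F - {A}. of_bool (A \<inter> B \<noteq> {}) * p ^ card (A \<union> B))"

lemma janson_indicator_le:
  fixes A S :: "'a set" and F :: "'a set set"
  assumes "finite F"
  defines "D \<equiv> of_bool (\<forall>B\<in>F. B \<inter> A = {} \<longrightarrow> \<not> B \<subseteq> S) :: real"
  shows "of_bool (A \<subseteq> S) * D - (\<Sum>B\<in>F. of_bool (A \<inter> B \<noteq> {}) * (of_bool (A \<union> B \<subseteq> S) * D))
    \<le> of_bool (A \<subseteq> S \<and> (\<forall>B\<in>F. \<not> B \<subseteq> S))"
proof (cases "A \<subseteq> S \<and> (\<forall>B\<in>F. B \<inter> A = {} \<longrightarrow> \<not> B \<subseteq> S) \<and> (\<exists>B\<in>F. B \<subseteq> S)")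
  case True
  then obtain B where B: "B \<in> F" "B \<subseteq> S" "A \<inter> B \<noteq> {}"
    by blast
  have "of_bool (A \<inter> B \<noteq> {}) * (of_bool (A \<union> B \<subseteq> S) * D)
      \<le> (\<Sum>B\<in>F. of_bool (A \<inter> B \<noteq> {}) * (of_bool (A \<union> B \<subseteq> S) * D))"
    using B(1) assms(1) by (intro member_le_sum) (auto simp: D_def)
  then show ?thesis
    using True B by (simp add: D_def)
next
  case False
  have "0 \<le> (\<Sum>B\<in>F. of_bool (A \<inter> B \<noteq> {}) * (of_bool (A \<union> B \<subseteq> S) * D))"
    by (intro sum_nonneg) (simp add: D_def)
  moreover have "of_bool (A \<subseteq> S) * D \<le> of_bool (A \<subseteq> S \<and> (\<forall>B\<in>F. \<not> B \<subseteq> S))"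
    using False by (auto simp: D_def)
  ultimately show ?thesis
    by linarith
qed

text \<open>The event of avoiding every \<open>B \<in> F\<close> disjoint from \<open>A\<close> is independent of \<open>A \<subseteq> S\<close>;
  on \<open>A \<subseteq> S\<close> any other \<open>B \<subseteq> S\<close> meets \<open>A\<close>, which costs at most the overlap sum.\<close>

lemma janson_prob_contains_ge:
  assumes V: "finite V" and p: "0 \<le> p" "p \<le> 1" and F: "F \<subseteq> Pow V" and A: "A \<subseteq> V"
  shows "subset_prob p V (\<lambda>S. \<forall>B\<in>F. B \<inter> A = {} \<longrightarrow> \<not> B \<subseteq> S)
      * (p ^ card A - (\<Sum>B\<in>F. of_bool (A \<inter> B \<noteq> {}) * p ^ card (A \<union> B)))
    \<le> subset_prob p V (\<lambda>S. A \<subseteq> S \<and> (\<forall>B\<in>F. \<not> B \<subseteq> S))"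
proof -
  define D where "D = (\<lambda>S. of_bool (\<forall>B\<in>F. B \<inter> A = {} \<longrightarrow> \<not> B \<subseteq> S) :: real)"
  define E where "E = subset_expectation p V"
  have indep: "E (\<lambda>S. of_bool (A \<subseteq> S) * D S) = p ^ card A * E D"
    unfolding E_def by (rule subset_expectation_contains_mult[OF V A]) (auto simp: D_def)
  have harris: "E (\<lambda>S. of_bool (A \<union> B \<subseteq> S) * D S) \<le> p ^ card (A \<union> B) * E D"
    if "B \<in> F" for B
  proof -
    have "mono_on (Pow V) (\<lambda>S. of_bool (A \<union> B \<subseteq> S) :: real)"
      by (auto intro!: monotone_onI) blast+
    moreover have "antimono_on (Pow V) D"
      by (auto simp: D_def intro!: monotone_onI) blast
    ultimately have "E (\<lambda>S. of_bool (A \<union> B \<subseteq> S) * D S) \<le> subset_prob p V (\<lambda>S. A \<union> B \<subseteq> S) * E D"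
      unfolding E_def by (rule harris_inequality_mixed[OF V p])
    also have "subset_prob p V (\<lambda>S. A \<union> B \<subseteq> S) = p ^ card (A \<union> B)"
      using that F A by (intro subset_prob_contains V) auto
    finally show ?thesis .
  qed
  have "E D * (p ^ card A - (\<Sum>B\<in>F. of_bool (A \<inter> B \<noteq> {}) * p ^ card (A \<union> B)))
      = p ^ card A * E D - (\<Sum>B\<in>F. of_bool (A \<inter> B \<noteq> {}) * (p ^ card (A \<union> B) * E D))"
    by (simp add: algebra_simps sum_distrib_left)
  also have "\<dots> \<le> E (\<lambda>S. of_bool (A \<subseteq> S) * D S)
      - (\<Sum>B\<in>F. of_bool (A \<inter> B \<noteq> {}) * E (\<lambda>S. of_bool (A \<union> B \<subseteq> S) * D S))"
    unfolding indep using harris by (intro diff_left_mono sum_mono mult_left_mono) auto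
  also have "\<dots> = E (\<lambda>S. of_bool (A \<subseteq> S) * D S
      - (\<Sum>B\<in>F. of_bool (A \<inter> B \<noteq> {}) * (of_bool (A \<union> B \<subseteq> S) * D S)))"
    unfolding E_def
    by (simp add: subset_expectation_diff subset_expectation_sum subset_expectation_mult_left)
  also have "\<dots> \<le> subset_prob p V (\<lambda>S. A \<subseteq> S \<and> (\<forall>B\<in>F. \<not> B \<subseteq> S))"
    unfolding E_def D_def using p janson_indicator_le[OF finite_subset[OF F], where A = A] V
    by (intro subset_expectation_mono) auto
  finally show ?thesis
    unfolding E_def D_def .
qed

lemma janson_step:
  assumes V: "finite V" and p: "0 \<le> p" "p \<le> 1" and F: "F \<subseteq> Pow V" and A: "A \<subseteq> V"
  shows "subset_prob p V (\<lambda>S. (\<forall>B\<in>F. \<not> B \<subseteq> S) \<and> \<not> A \<subseteq> S)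
    \<le> subset_prob p V (\<lambda>S. \<forall>B\<in>F. \<not> B \<subseteq> S)
      * (1 - p ^ card A + (\<Sum>B\<in>F. of_bool (A \<inter> B \<noteq> {}) * p ^ card (A \<union> B)))"
proof -
  define x where "x = p ^ card A - (\<Sum>B\<in>F. of_bool (A \<inter> B \<noteq> {}) * p ^ card (A \<union> B))"
  define P where "P = subset_prob p V (\<lambda>S. \<forall>B\<in>F. \<not> B \<subseteq> S)"
  define P' where "P' = subset_prob p V (\<lambda>S. \<forall>B\<in>F. B \<inter> A = {} \<longrightarrow> \<not> B \<subseteq> S)"
  define Q where "Q = subset_prob p V (\<lambda>S. A \<subseteq> S \<and> (\<forall>B\<in>F. \<not> B \<subseteq> S))"
  have split: "subset_prob p V (\<lambda>S. (\<forall>B\<in>F. \<not> B \<subseteq> S) \<and> \<not> A \<subseteq> S) = P - Q"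
    unfolding P_def Q_def subset_expectation_diff[symmetric]
    by (intro subset_expectation_cong) auto
  have "P \<le> P'" "0 \<le> P" "0 \<le> Q"
    unfolding P_def P'_def Q_def
    by (intro subset_expectation_mono subset_expectation_nonneg p; auto)+
  moreover have "P' * x \<le> Q"
    unfolding P'_def Q_def x_def by (rule janson_prob_contains_ge[OF V p F A])
  ultimately have "P * x \<le> Q"
    by (cases "0 \<le> x") (auto intro: order_trans[OF mult_right_mono] order_trans[OF mult_nonneg_nonpos])
  then show ?thesis
    unfolding split P_def[symmetric] by (simp add: x_def algebra_simps)
qed

lemma janson_Delta_insert:
  assumes "finite F" "A \<notin> F" "0 \<le> p"
  shows "janson_Delta p F + (\<Sum>B\<in>F. of_bool (A \<inter> B \<noteq> {}) * p ^ card (A \<union> B))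
    \<le> janson_Delta p (insert A F)"
proof -
  have "janson_Delta p F
      \<le> (\<Sum>C\<in>F. \<Sum>B\<in>insert A F - {C}. of_bool (C \<inter> B \<noteq> {}) * p ^ card (C \<union> B))"
    unfolding janson_Delta_def using assms by (intro sum_mono sum_mono2) auto
  moreover have "insert A F - {A} = F"
    using assms by auto
  ultimately show ?thesis
    unfolding janson_Delta_def using assms by simp
qed

theorem janson_inequality:
  assumes V: "finite V" and p: "0 \<le> p" "p \<le> 1" and F: "finite F" "F \<subseteq> Pow V"
  shows "subset_prob p V (\<lambda>S. \<forall>A\<in>F. \<not> A \<subseteq> S) \<le> exp (- janson_mu p F + janson_Delta p F)"
  using F
proof (induction F rule: finite_induct)
  case empty
  then show ?case using V by (simp add: subset_expectation_const janson_mu_def janson_Delta_def)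
next
  case (insert A F)
  define y where "y = (\<Sum>B\<in>F. of_bool (A \<inter> B \<noteq> {}) * p ^ card (A \<union> B))"
  define P where "P = subset_prob p V (\<lambda>S. \<forall>B\<in>F. \<not> B \<subseteq> S)"
  have "0 \<le> P"
    unfolding P_def by (rule subset_expectation_nonneg[OF p]) simp
  have "subset_prob p V (\<lambda>S. \<forall>B\<in>insert A F. \<not> B \<subseteq> S)
      = subset_prob p V (\<lambda>S. (\<forall>B\<in>F. \<not> B \<subseteq> S) \<and> \<not> A \<subseteq> S)"
    by (rule subset_expectation_cong) auto
  also have "\<dots> \<le> P * (1 - p ^ card A + y)"
    unfolding P_def y_def using insert.prems by (intro janson_step[OF V p]) auto
  also have "\<dots> \<le> exp (- janson_mu p F + janson_Delta p F) * exp (y - p ^ card A)"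
  proof (cases "0 \<le> 1 - p ^ card A + y")
    case True
    have "1 - p ^ card A + y \<le> exp (y - p ^ card A)"
      using exp_ge_add_one_self[of "y - p ^ card A"] by linarith
    then show ?thesis
      using True insert.IH insert.prems \<open>0 \<le> P\<close> unfolding P_def by (intro mult_mono) auto
  next
    case False
    then have "P * (1 - p ^ card A + y) \<le> 0"
      using \<open>0 \<le> P\<close> by (simp add: mult_nonneg_nonpos)
    then show ?thesis
      by (rule order_trans) simp
  qed
  also have "\<dots> = exp (- janson_mu p (insert A F) + (janson_Delta p F + y))"
    using insert.hyps by (simp add: janson_mu_def exp_add[symmetric])
  also have "\<dots> \<le> exp (- janson_mu p (insert A F) + janson_Delta p (insert A F))"
    using janson_Delta_insert[OF insert.hyps p(1)] unfolding y_def by simp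
  finally show ?case .
qed

lemma exp_neg_janson_mu_le_prod:
  assumes V: "finite V" and F: "F \<subseteq> Pow V" "{} \<notin> F" and p: "0 \<le> p" "p \<le> 1/2"
  shows "exp (- (1 + 2 * p) * janson_mu p F) \<le> (\<Prod>A\<in>F. 1 - p ^ card A)"
proof -
  have "exp (- (1 + 2 * p) * janson_mu p F) = (\<Prod>A\<in>F. exp (- (1 + 2 * p) * p ^ card A))"
    unfolding janson_mu_def sum_distrib_left using finite_subset[OF F(1)] V by (simp add: exp_sum)
  also have "\<dots> \<le> (\<Prod>A\<in>F. 1 - p ^ card A)"
  proof (intro prod_mono conjI)
    fix A assume A: "A \<in> F"
    define x where "x = p ^ card A"
    have "x \<le> p"
    proof -
      have "1 \<le> card A"
        using A F V finite_subset[of A V] by (auto simp: Suc_le_eq card_gt_0_iff)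
      then show ?thesis
        unfolding x_def using power_decreasing[of 1 "card A" p] p by simp
    qed
    moreover have "0 \<le> x"
      unfolding x_def using p by simp
    ultimately have "- (1 + 2 * p) * x \<le> - x - 2 * x\<^sup>2"
      by (simp add: power2_eq_square algebra_simps mult_right_mono)
    also have "\<dots> \<le> ln (1 - x)"
      using \<open>0 \<le> x\<close> \<open>x \<le> p\<close> p by (intro ln_one_minus_pos_lower_bound) auto
    finally have "exp (- (1 + 2 * p) * x) \<le> exp (ln (1 - x))"
      by simp
    also have "exp (ln (1 - x)) = 1 - x"
      using \<open>x \<le> p\<close> p by simp
    finally show "exp (- (1 + 2 * p) * p ^ card A) \<le> 1 - p ^ card A"
      unfolding x_def .
  qed simp
  finally show ?thesis .
qed

subsection \<open>The second moment method\<close>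

lemma prob_none_mult_square_le:
  fixes Q :: "'b \<Rightarrow> 'a set \<Rightarrow> bool" and T :: "'b set"
  assumes V: "finite V" and p: "0 \<le> p" "p \<le> 1"
  defines "M \<equiv> \<Sum>g\<in>T. subset_prob p V (Q g)"
  shows "subset_prob p V (\<lambda>S. \<forall>g\<in>T. \<not> Q g S) * M\<^sup>2
    \<le> (\<Sum>g\<in>T. \<Sum>h\<in>T. subset_prob p V (\<lambda>S. Q g S \<and> Q h S)) - M\<^sup>2"
proof -
  define X where "X = (\<lambda>S. \<Sum>g\<in>T. of_bool (Q g S) :: real)"
  define E where "E = subset_expectation p V"
  have EX: "E X = M"
    unfolding X_def M_def E_def by (rule subset_expectation_sum)
  have X2: "X S * X S = (\<Sum>g\<in>T. \<Sum>h\<in>T. of_bool (Q g S \<and> Q h S))" for S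
    unfolding X_def sum_product by (intro sum.cong refl) simp
  \<comment> \<open>On the event \<open>X = 0\<close> we have \<open>(X - M)\<^sup>2 = M\<^sup>2\<close>.\<close>
  have "subset_prob p V (\<lambda>S. \<forall>g\<in>T. \<not> Q g S) * M\<^sup>2 \<le> E (\<lambda>S. (X S - M) * (X S - M))"
    unfolding E_def subset_expectation_mult_right[symmetric]
    by (rule subset_expectation_mono[OF p]) (auto simp: X_def power2_eq_square)
  also have "E (\<lambda>S. (X S - M) * (X S - M)) = E (\<lambda>S. X S * X S - 2 * M * X S + M * M)"
    unfolding E_def by (rule subset_expectation_cong) (simp add: algebra_simps)
  also have "\<dots> = E (\<lambda>S. X S * X S) - M\<^sup>2"
    using V EX unfolding E_def
    by (simp add: subset_expectation_add subset_expectation_diff subset_expectation_mult_left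
        subset_expectation_const power2_eq_square)
  finally show ?thesis
    unfolding X2 E_def subset_expectation_sum .
qed

theorem second_moment_bound:
  fixes Q :: "'b \<Rightarrow> 'a set \<Rightarrow> bool"
  assumes V: "finite V" and p: "0 \<le> p" "p \<le> 1" and T: "finite T" and R: "0 \<le> R"
    and pair: "\<And>g h. g \<in> T \<Longrightarrow> h \<in> T \<Longrightarrow> g \<noteq> h \<Longrightarrow>
      subset_prob p V (\<lambda>S. Q g S \<and> Q h S) \<le> R * subset_prob p V (Q g) * subset_prob p V (Q h)"
  defines "M \<equiv> \<Sum>g\<in>T. subset_prob p V (Q g)"
  assumes M: "0 < M"
  shows "subset_prob p V (\<lambda>S. \<forall>g\<in>T. \<not> Q g S) \<le> 1 / M + R - 1"
proof -
  have "(\<Sum>g\<in>T. \<Sum>h\<in>T. subset_prob p V (\<lambda>S. Q g S \<and> Q h S)) \<le> (\<Sum>g\<in>T. \<Sum>h\<in>T.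
      (if g = h then subset_prob p V (Q g) else 0) + R * subset_prob p V (Q g) * subset_prob p V (Q h))"
  proof (intro sum_mono)
    fix g h assume "g \<in> T" "h \<in> T"
    moreover have "0 \<le> R * subset_prob p V (Q g) * subset_prob p V (Q h)"
      using R p by (intro mult_nonneg_nonneg subset_expectation_nonneg) auto
    ultimately show "subset_prob p V (\<lambda>S. Q g S \<and> Q h S)
        \<le> (if g = h then subset_prob p V (Q g) else 0) + R * subset_prob p V (Q g) * subset_prob p V (Q h)"
      using pair[of g h] by (cases "g = h") auto
  qed
  also have "\<dots> = M + R * M\<^sup>2"
  proof -
    have "(\<Sum>g\<in>T. \<Sum>h\<in>T. if g = h then subset_prob p V (Q g) else 0) = M"
      unfolding M_def using T by (simp add: sum.delta)
    moreover have "M\<^sup>2 = (\<Sum>g\<in>T. \<Sum>h\<in>T. subset_prob p V (Q g) * subset_prob p V (Q h))"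
      unfolding M_def power2_eq_square by (rule sum_product)
    then have "R * M\<^sup>2 = (\<Sum>g\<in>T. \<Sum>h\<in>T. R * subset_prob p V (Q g) * subset_prob p V (Q h))"
      by (simp add: sum_distrib_left mult.assoc)
    ultimately show ?thesis
      by (simp only: sum.distrib)
  qed
  finally have "subset_prob p V (\<lambda>S. \<forall>g\<in>T. \<not> Q g S) * M\<^sup>2 \<le> M + R * M\<^sup>2 - M\<^sup>2"
    using prob_none_mult_square_le[OF V p, where T = T and Q = Q] unfolding M_def by linarith
  then have "subset_prob p V (\<lambda>S. \<forall>g\<in>T. \<not> Q g S) \<le> (M + R * M\<^sup>2 - M\<^sup>2) / M\<^sup>2"
    using M by (simp add: pos_le_divide_eq)
  also have "\<dots> = 1 / M + R - 1"
    using M by (simp add: field_simps power2_eq_square)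
  finally show ?thesis .
qed

section \<open>Sums in the group of subsets under symmetric difference\<close>

definition xor_sum :: "'a set set \<Rightarrow> 'a set" where
  "xor_sum A = {i. odd (card {a\<in>A. i \<in> a})}"

lemma xor_sum_empty [simp]: "xor_sum {} = {}"
  by (simp add: xor_sum_def)

lemma xor_sum_Un:
  assumes "finite A" "finite B" "A \<inter> B = {}"
  shows "xor_sum (A \<union> B) = sym_diff (xor_sum A) (xor_sum B)"
proof -
  have "card {a\<in>A \<union> B. i \<in> a} = card {a\<in>A. i \<in> a} + card {a\<in>B. i \<in> a}" for i
  proof -
    have "{a\<in>A \<union> B. i \<in> a} = {a\<in>A. i \<in> a} \<union> {a\<in>B. i \<in> a}"
      by auto
    then show ?thesis
      using assms by (simp add: card_Un_disjoint disjoint_iff)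
  qed
  then show ?thesis
    unfolding xor_sum_def by auto
qed

lemma xor_sum_singleton [simp]: "xor_sum {a} = a"
proof -
  have "{b\<in>{a}. i \<in> b} = (if i \<in> a then {a} else {})" for i
    by auto
  then show ?thesis
    unfolding xor_sum_def by auto
qed

lemma xor_sum_insert:
  "finite A \<Longrightarrow> a \<notin> A \<Longrightarrow> xor_sum (insert a A) = sym_diff a (xor_sum A)"
  using xor_sum_Un[of "{a}" A] by simp

lemma xor_sum_remove:
  assumes "finite A" "a \<in> A"
  shows "a = sym_diff (xor_sum A) (xor_sum (A - {a}))"
proof -
  have "xor_sum A = sym_diff a (xor_sum (A - {a}))"
    using xor_sum_insert[of "A - {a}" a] assms by (simp add: insert_absorb)
  then show ?thesis
    by blast
qed

definition xor_representations :: "'a set set \<Rightarrow> nat \<Rightarrow> 'a set \<Rightarrow> 'a set set set" where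
  "xor_representations V k g = {A. A \<subseteq> V \<and> card A = k \<and> xor_sum A = g}"

definition short_xor_representations :: "'a set set \<Rightarrow> nat \<Rightarrow> 'a set \<Rightarrow> 'a set set set" where
  "short_xor_representations V d g = {A. A \<subseteq> V \<and> card A \<le> d \<and> xor_sum A = g}"

lemma finite_xor_representations: "finite V \<Longrightarrow> finite (xor_representations V k g)"
  unfolding xor_representations_def by (rule finite_subset[of _ "Pow V"]) auto

lemma finite_short_xor_representations: "finite V \<Longrightarrow> finite (short_xor_representations V d g)"
  unfolding short_xor_representations_def by (rule finite_subset[of _ "Pow V"]) auto

text \<open>Removing any element of a \<open>k\<close>-term representation of \<open>g\<close> leaves a \<open>(k - 1)\<close>-set that
  determines the removed element, so each \<open>(k - 1)\<close>-subset of \<open>V\<close> arises at most once.\<close>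

lemma card_xor_representations_le_binomial:
  assumes V: "finite V" and k: "1 \<le> k"
  shows "k * card (xor_representations V k g) \<le> card V choose (k - 1)"
proof -
  define R where "R = xor_representations V k g"
  define Sig where "Sig = Sigma R (\<lambda>A. A)"
  have fin: "finite R" "\<And>A. A \<in> R \<Longrightarrow> finite A"
    using finite_xor_representations[OF V] V
    unfolding R_def xor_representations_def by (auto intro: finite_subset)
  have "card Sig = (\<Sum>A\<in>R. card A)"
    unfolding Sig_def using fin by simp
  also have "\<dots> = k * card R"
    by (simp add: R_def xor_representations_def)
  finally have card_Sig: "card Sig = k * card R" .
  have removed: "a = sym_diff g (xor_sum (A - {a}))" if "A \<in> R" "a \<in> A" for A a
  proof -
    have "xor_sum A = g"
      using that(1) unfolding R_def xor_representations_def by simp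
    then show ?thesis
      using xor_sum_remove[OF fin(2)[OF that(1)] that(2)] by metis
  qed
  have "inj_on (\<lambda>(A, a). A - {a}) Sig"
  proof (rule inj_onI, clarify)
    fix A a A' a' assume Sig: "(A, a) \<in> Sig" "(A', a') \<in> Sig" and eq: "A - {a} = A' - {a'}"
    then have mem: "A \<in> R" "a \<in> A" "A' \<in> R" "a' \<in> A'"
      unfolding Sig_def by auto
    have "a = sym_diff g (xor_sum (A - {a}))" "a' = sym_diff g (xor_sum (A' - {a'}))"
      using removed mem by blast+
    then have "a = a'"
      using eq by metis
    moreover have "A = insert a (A - {a})" "A' = insert a' (A' - {a'})"
      using mem by auto
    ultimately show "A = A' \<and> a = a'"
      using eq by metis
  qed
  moreover have "(\<lambda>(A, a). A - {a}) ` Sig \<subseteq> {B. B \<subseteq> V \<and> card B = k - 1}"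
  proof (rule image_subsetI)
    fix x assume "x \<in> Sig"
    then obtain A a where "x = (A, a)" "A \<in> R" "a \<in> A"
      unfolding Sig_def by auto
    then show "(\<lambda>(A, a). A - {a}) x \<in> {B. B \<subseteq> V \<and> card B = k - 1}"
      using fin(2)[of A] unfolding R_def xor_representations_def by auto
  qed
  ultimately have "card Sig \<le> card {B. B \<subseteq> V \<and> card B = k - 1}"
    by (intro card_inj_on_le) (use V in simp_all)
  also have "\<dots> = card V choose (k - 1)"
    by (rule n_subsets[OF V])
  finally show ?thesis
    using card_Sig R_def by simp
qed

lemma card_xor_representations_le:
  assumes V: "finite V" and k: "1 \<le> k"
  shows "real (card (xor_representations V k g)) \<le> real (card V) ^ (k - 1) / fact k"
proof -
  have "k * card (xor_representations V k g) * fact (k - 1) \<le> (card V choose (k - 1)) * fact (k - 1)"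
    using card_xor_representations_le_binomial[OF V k] by simp
  also have "\<dots> \<le> card V ^ (k - 1)"
    by (rule binomial_fact_pow)
  finally have "card (xor_representations V k g) * (k * fact (k - 1)) \<le> card V ^ (k - 1)"
    by (simp add: ac_simps)
  then have "real (card (xor_representations V k g)) * (k * fact (k - 1)) \<le> real (card V) ^ (k - 1)"
    by (metis of_nat_fact of_nat_le_iff of_nat_mult of_nat_power)
  moreover have "(fact k :: real) = real (k * fact (k - 1))"
    using k fact_reduce[of k, where 'a=real] by simp
  ultimately show ?thesis
    using k by (simp add: pos_le_divide_eq ac_simps)
qed

lemma Z2n_carrier: "carrier (Z2n n) = Pow {..<n}"
  by (simp add: Z2n_def)

lemma Z2n_mult: "x \<otimes>\<^bsub>Z2n n\<^esub> y = sym_diff x y"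
  by (simp add: Z2n_def)

lemma Z2n_inv: "x \<in> carrier (Z2n n) \<Longrightarrow> inv\<^bsub>Z2n n\<^esub> x = x"
  unfolding m_inv_def by (rule the_equality) (auto simp: Z2n_def)

lemma sym_diff_mem_of_Z2n_edge:
  "(x, y) \<in> cayley_edges (Z2n n) S \<Longrightarrow> sym_diff x y \<in> S"
  unfolding cayley_edges_def by (auto simp: Z2n_inv Z2n_mult Un_commute)

lemma Z2n_walk_xor_sum:
  assumes "finite S" "(x, z) \<in> cayley_edges (Z2n n) S ^^ k"
  shows "\<exists>A\<subseteq>S. card A \<le> k \<and> xor_sum A = sym_diff x z"
  using assms(2)
proof (induction k arbitrary: z)
  case 0
  then show ?case by (auto intro!: exI[of _ "{}"])
next
  case (Suc k)
  then obtain y where y: "(x, y) \<in> cayley_edges (Z2n n) S ^^ k" "(y, z) \<in> cayley_edges (Z2n n) S"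
    by auto
  obtain A where A: "A \<subseteq> S" "card A \<le> k" "xor_sum A = sym_diff x y"
    using Suc.IH[OF y(1)] by blast
  have "finite A"
    using A(1) assms(1) by (rule finite_subset)
  define s where "s = sym_diff y z"
  have "s \<in> S"
    unfolding s_def by (rule sym_diff_mem_of_Z2n_edge[OF y(2)])
  have xz: "sym_diff x z = sym_diff s (sym_diff x y)"
    unfolding s_def by blast
  show ?case
  proof (cases "s \<in> A")
    case True
    then have "xor_sum (A - {s}) = sym_diff x z"
      using xor_sum_remove[OF \<open>finite A\<close> True] A(3) xz by blast
    moreover have "card (A - {s}) \<le> Suc k"
      using A(2) card_Diff1_le[of A s] by linarith
    ultimately show ?thesis
      using A(1) by (intro exI[of _ "A - {s}"]) auto
  next
    case False
    then have "xor_sum (insert s A) = sym_diff x z"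
      using xor_sum_insert[OF \<open>finite A\<close> False] A(3) xz by simp
    moreover have "card (insert s A) \<le> Suc k"
      using A(2) \<open>finite A\<close> False by simp
    ultimately show ?thesis
      using A(1) \<open>s \<in> S\<close> by (intro exI[of _ "insert s A"]) auto
  qed
qed

lemma Z2n_diam_le_imp_short_xor_representation:
  assumes "S \<subseteq> Pow {..<n}" "cayley_diam_le (Z2n n) S d" "g \<in> Pow {..<n}"
  shows "\<exists>A\<subseteq>S. card A \<le> d \<and> xor_sum A = g"
proof -
  have "finite S"
    using assms(1) by (rule finite_subset) simp
  have "\<forall>x\<in>Pow {..<n}. \<forall>y\<in>Pow {..<n}. \<exists>k\<le>d. (x, y) \<in> cayley_edges (Z2n n) S ^^ k"
    using assms(2) unfolding cayley_diam_le_def Z2n_carrier .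
  then obtain k where k: "k \<le> d" "({}, g) \<in> cayley_edges (Z2n n) S ^^ k"
    using assms(3) by (meson Pow_bottom)
  obtain A where "A \<subseteq> S" "card A \<le> k" "xor_sum A = sym_diff {} g"
    using Z2n_walk_xor_sum[OF \<open>finite S\<close> k(2)] by blast
  with k(1) show ?thesis
    by (intro exI[of _ A]) auto
qed

lemma janson_mu_short_xor_representations:
  assumes V: "finite V" and g: "g \<noteq> {}"
  shows "janson_mu p (short_xor_representations V d g)
    = (\<Sum>k=1..d. real (card (xor_representations V k g)) * p ^ k)"
proof -
  have "janson_mu p (short_xor_representations V d g)
      = (\<Sum>k=1..d. \<Sum>A\<in>{A\<in>short_xor_representations V d g. card A = k}. p ^ card A)"
    unfolding janson_mu_def
  proof (rule sum.group[symmetric])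
    show "card ` short_xor_representations V d g \<subseteq> {1..d}"
    proof (rule image_subsetI)
      fix A assume A: "A \<in> short_xor_representations V d g"
      then have "finite A" "A \<noteq> {}"
        using g V finite_subset unfolding short_xor_representations_def by auto
      then show "card A \<in> {1..d}"
        using A unfolding short_xor_representations_def by (auto simp: Suc_le_eq)
    qed
  qed (use finite_short_xor_representations[OF V] in auto)
  also have "\<dots> = (\<Sum>k=1..d. \<Sum>A\<in>xor_representations V k g. p ^ k)"
    by (intro sum.cong)
      (auto simp: short_xor_representations_def xor_representations_def)
  finally show ?thesis
    by simp
qed

lemma xor_representation_overlap_split:
  assumes V: "finite V" and A: "A \<subseteq> V" "card A = d"
    and B: "B \<in> xor_representations V d g" "B \<noteq> A"
  shows "A \<inter> B \<subset> A"
    and "B - A \<in> xor_representations V (d - card (A \<inter> B)) (sym_diff g (xor_sum (A \<inter> B)))"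
    and "card (A \<union> B) = d + card (B - A)"
proof -
  have fin: "finite A" "finite B" and B': "B \<subseteq> V" "card B = d" "xor_sum B = g"
    using A B V finite_subset unfolding xor_representations_def by auto
  show "A \<inter> B \<subset> A"
  proof
    show "A \<inter> B \<noteq> A"
    proof
      assume "A \<inter> B = A"
      then have "A \<subseteq> B"
        by blast
      then have "A = B"
        using card_subset_eq[OF fin(2)] A(2) B'(2) by simp
      with B(2) show False
        by simp
    qed
  qed blast
  have "A \<inter> B \<union> (B - A) = B" "A \<inter> B \<inter> (B - A) = {}"
    by blast+
  then have "xor_sum B = sym_diff (xor_sum (A \<inter> B)) (xor_sum (B - A))"
    using xor_sum_Un[of "A \<inter> B" "B - A"] fin by simp
  moreover have "card (B - A) = d - card (A \<inter> B)"
    using fin B'(2) by (simp add: card_Diff_subset_Int Int_commute)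
  ultimately show "B - A \<in> xor_representations V (d - card (A \<inter> B)) (sym_diff g (xor_sum (A \<inter> B)))"
    using B' unfolding xor_representations_def by blast
  show "card (A \<union> B) = d + card (B - A)"
    using card_Un_disjoint[of A "B - A"] fin A(2) by (simp add: Un_Diff_cancel)
qed

lemma sum_power_xor_representations_le:
  assumes V: "finite V" and i: "1 \<le> i" and p: "0 \<le> p"
    and small: "real (card V) ^ (i - 1) / fact i * p ^ i \<le> \<theta>"
  shows "(\<Sum>D\<in>xor_representations V i h. p ^ (d + card D)) \<le> p ^ d * \<theta>"
proof -
  have "(\<Sum>D\<in>xor_representations V i h. p ^ (d + card D))
      = real (card (xor_representations V i h)) * p ^ i * p ^ d"
    by (simp add: xor_representations_def power_add)
  also have "\<dots> \<le> real (card V) ^ (i - 1) / fact i * p ^ i * p ^ d"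
    using card_xor_representations_le[OF V i] p by (intro mult_right_mono) auto
  also have "\<dots> \<le> p ^ d * \<theta>"
    using mult_left_mono[OF small, of "p ^ d"] p by (simp add: ac_simps)
  finally show ?thesis .
qed

lemma xor_representations_overlap_le:
  assumes V: "finite V" and A: "A \<subseteq> V" "card A = d" and p: "0 \<le> p" and \<theta>: "0 \<le> \<theta>"
    and small: "\<And>i. 1 \<le> i \<Longrightarrow> i < d \<Longrightarrow> real (card V) ^ (i - 1) / fact i * p ^ i \<le> \<theta>"
  shows "(\<Sum>B\<in>xor_representations V d g - {A}. of_bool (A \<inter> B \<noteq> {}) * p ^ card (A \<union> B))
    \<le> 2 ^ d * p ^ d * \<theta>"
proof -
  define Bs where "Bs = {B \<in> xor_representations V d g - {A}. A \<inter> B \<noteq> {}}"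
  define Cs where "Cs = {C. C \<subset> A \<and> C \<noteq> {}}"
  define Ds where "Ds = (\<lambda>C. xor_representations V (d - card C) (sym_diff g (xor_sum C)))"
  define f where "f = (\<lambda>(C :: 'a set set, D :: 'a set set). p ^ (d + card D))"
  have fin: "finite A" "finite Cs" "finite (Sigma Cs Ds)"
    using A V finite_subset unfolding Cs_def Ds_def
    by (auto intro!: finite_xor_representations finite_subset[of _ "Pow A"])
  have split: "(A \<inter> B, B - A) \<in> Sigma Cs Ds" "p ^ card (A \<union> B) = f (A \<inter> B, B - A)"
    if "B \<in> Bs" for B
    using xor_representation_overlap_split[OF V A, of B g] that
    unfolding Bs_def Cs_def Ds_def f_def by auto
  have inj: "inj_on (\<lambda>B. (A \<inter> B, B - A)) Bs"
  proof (rule inj_onI)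
    fix B B' assume "(A \<inter> B, B - A) = (A \<inter> B', B' - A)"
    then show "B = B'"
      by blast
  qed
  have "(\<Sum>B\<in>xor_representations V d g - {A}. of_bool (A \<inter> B \<noteq> {}) * p ^ card (A \<union> B))
      = (\<Sum>B\<in>Bs. f (A \<inter> B, B - A))"
    unfolding Bs_def using finite_xor_representations[OF V]
    by (subst sum.inter_filter) (simp, rule sum.cong, auto simp: split Bs_def)
  also have "\<dots> = (\<Sum>x\<in>(\<lambda>B. (A \<inter> B, B - A)) ` Bs. f x)"
    by (simp add: sum.reindex[OF inj])
  also have "\<dots> \<le> (\<Sum>x\<in>Sigma Cs Ds. f x)"
    using split(1) fin(3) p by (intro sum_mono2) (auto simp: f_def)
  also have "\<dots> = (\<Sum>C\<in>Cs. \<Sum>D\<in>Ds C. p ^ (d + card D))"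
    unfolding f_def using fin V by (subst sum.Sigma) (auto simp: Ds_def finite_xor_representations)
  also have "\<dots> \<le> (\<Sum>C\<in>Cs. p ^ d * \<theta>)"
  proof (rule sum_mono)
    fix C assume "C \<in> Cs"
    then have "card C < d" "card C \<noteq> 0"
      using psubset_card_mono[OF fin(1)] A(2) finite_subset[OF _ fin(1)] unfolding Cs_def by auto
    then show "(\<Sum>D\<in>Ds C. p ^ (d + card D)) \<le> p ^ d * \<theta>"
      unfolding Ds_def using small[of "d - card C"] by (intro sum_power_xor_representations_le V p) auto
  qed
  also have "\<dots> \<le> 2 ^ d * (p ^ d * \<theta>)"
  proof -
    have "card Cs \<le> card (Pow A)"
      using fin(1) unfolding Cs_def by (intro card_mono) auto
    then have "card Cs \<le> 2 ^ d"
      using fin(1) A(2) by (simp add: card_Pow)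
    then have "real (card Cs) \<le> 2 ^ d"
      by (metis of_nat_le_iff of_nat_numeral of_nat_power)
    then show ?thesis
      using p \<theta> by (simp add: mult_right_mono)
  qed
  finally show ?thesis
    by (simp add: mult.assoc)
qed

section \<open>Analytic estimates\<close>

lemma power_le_mult_exp_neg_div:
  fixes q M L :: real
  assumes q: "0 \<le> q" "q ^ d \<le> M" and M: "exp L \<le> M" and L: "0 \<le> L" and i: "i < d"
  shows "q ^ i \<le> M * exp (- L / d)"
proof (cases "q \<le> 1")
  case True
  have "q ^ i \<le> 1"
    using True q by (simp add: power_le_one)
  also have "1 \<le> exp (L - L / d)"
    using L i mult_left_mono[of 1 "real d" L] by (simp add: divide_le_eq)
  also have "exp (L - L / d) \<le> M * exp (- L / d)"
    using M by (simp add: exp_diff exp_minus field_simps)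
  finally show ?thesis .
next
  case False
  then have q1: "1 < q"
    by simp
  have "0 < M"
    using M exp_gt_zero order_less_le_trans by blast
  have "real d * ln q \<le> ln M"
  proof -
    have "0 < q ^ d"
      using q1 by simp
    then have "ln (q ^ d) \<le> ln M"
      using q(2) \<open>0 < M\<close> by simp
    then show ?thesis
      using q1 by (simp add: ln_realpow)
  qed
  then have "ln q \<le> ln M / d"
    using i by (simp add: le_divide_eq mult.commute)
  then have "real (d - 1) * ln q \<le> real (d - 1) * (ln M / d)"
    by (rule mult_left_mono) simp
  also have "\<dots> = ln M - ln M / d"
    using i by (simp add: of_nat_diff field_simps)
  also have "\<dots> \<le> ln M - L / d"
    using M \<open>0 < M\<close> by (simp add: divide_right_mono ln_ge_iff)
  finally have exponent: "real (d - 1) * ln q \<le> ln M - L / d" .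
  have "q ^ (d - 1) = exp (real (d - 1) * ln q)"
    using q1 exp_of_nat_mult[of "d - 1" "ln q"] by simp
  also have "\<dots> \<le> exp (ln M - L / d)"
    using exponent by simp
  also have "\<dots> = M * exp (- L / d)"
    using \<open>0 < M\<close> by (simp add: exp_diff exp_minus field_simps)
  finally have "q ^ (d - 1) \<le> M * exp (- L / d)" .
  moreover have "q ^ i \<le> q ^ (d - 1)"
    using q1 i by (intro power_increasing) auto
  ultimately show ?thesis
    by linarith
qed

lemma lower_order_term_le:
  fixes N L p :: real
  assumes N: "N = exp L" and L: "1 \<le> L" and p: "0 \<le> p"
    and pd: "p ^ d \<le> fact d * L / N ^ (d - 1)" and i: "1 \<le> i" "i < d"
  shows "N ^ (i - 1) / fact i * p ^ i \<le> fact d * L * exp (- L / d)"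
proof -
  define q where "q = p * N"
  define M where "M = fact d * L * N"
  have "0 < N" "0 < i" "0 < d"
    using N i by auto
  have "1 \<le> fact d * L"
    using mult_mono[of 1 "fact d" 1 L] L by simp
  then have "exp L \<le> M"
    unfolding M_def N using mult_right_mono[of 1 "fact d * L" "exp L"] by simp
  have "q ^ d = p ^ d * (N ^ (d - 1) * N)"
    by (simp only: q_def power_mult_distrib power_minus_mult[OF \<open>0 < d\<close>])
  also have "\<dots> \<le> fact d * L / N ^ (d - 1) * (N ^ (d - 1) * N)"
    using pd \<open>0 < N\<close> by (intro mult_right_mono) auto
  also have "\<dots> = M"
    unfolding M_def using \<open>0 < N\<close> by simp
  finally have "q ^ d \<le> M" .
  have N_pow_i: "N ^ i = N ^ (i - 1) * N"
    by (rule power_minus_mult[OF \<open>0 < i\<close>, symmetric])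
  have "0 \<le> N ^ (i - 1) * p ^ i"
    using \<open>0 < N\<close> p by simp
  then have "N ^ (i - 1) / fact i * p ^ i \<le> N ^ (i - 1) * p ^ i"
    by (simp add: divide_le_eq mult_le_cancel_left1)
  also have "\<dots> = q ^ i / N"
    using \<open>0 < N\<close> by (simp add: q_def power_mult_distrib N_pow_i)
  also have "\<dots> \<le> M * exp (- L / d) / N"
    using power_le_mult_exp_neg_div[of q d M L i] \<open>q ^ d \<le> M\<close> \<open>exp L \<le> M\<close> L i p \<open>0 < N\<close>
    by (intro divide_right_mono) (auto simp: q_def)
  also have "\<dots> = fact d * L * exp (- L / d)"
    unfolding M_def using \<open>0 < N\<close> by simp
  finally show ?thesis .
qed

lemma two_power_mult_fact_le:
  fixes L :: real
  assumes d: "2 \<le> d" and L: "4 * real d ^ 2 \<le> L"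
  shows "2 ^ d * real d * fact d \<le> L ^ d"
proof -
  have "(fact d :: real) \<le> real d ^ d"
    using fact_le_power[of d, where 'a=real] by simp
  then have "2 ^ d * real d * fact d \<le> 2 ^ d * real d * real d ^ d"
    by (simp add: mult_left_mono)
  also have "\<dots> = (2 * real d) ^ d * real d"
    by (simp add: power_mult_distrib)
  also have "\<dots> \<le> (2 * real d) ^ d * (2 * real d) ^ d"
    using d self_le_power[of "2 * real d" d] by (intro mult_left_mono) auto
  also have "\<dots> = (4 * real d ^ 2) ^ d"
  proof -
    have "(2 * real d) * (2 * real d) = 4 * real d ^ 2"
      by (simp add: power2_eq_square)
    then show ?thesis
      by (metis power_mult_distrib)
  qed
  also have "\<dots> \<le> L ^ d"
    using L by (intro power_mono) auto
  finally show ?thesis .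
qed

lemma power_mult_exp_neg_div_le:
  fixes L :: real
  assumes L: "0 < L" and d: "0 < d" "4 * real d ^ 2 \<le> L" "real d ^ 2 * ln L \<le> L / 2"
  shows "L ^ d * exp (- L / d) \<le> exp (- sqrt L)"
proof -
  have "2 * real d \<le> sqrt L"
    using real_le_rsqrt[of "2 * real d" L] d(2) by (simp add: power_mult_distrib)
  then have "2 * real d * sqrt L \<le> sqrt L * sqrt L"
    using L by (intro mult_right_mono) auto
  then have "real d * (real d * ln L + sqrt L) \<le> L"
    using d(3) L by (simp add: power2_eq_square algebra_simps)
  then have "real d * ln L + sqrt L \<le> L / d"
    using d(1) by (simp add: le_divide_eq mult.commute)
  moreover have "L ^ d * exp (- L / d) = exp (real d * ln L - L / d)"
    using L exp_of_nat_mult[of d "ln L"] by (simp add: exp_diff exp_minus field_simps)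
  ultimately show ?thesis
    by simp
qed

lemma overlap_factor_le:
  fixes L :: real and d :: nat
  assumes L: "0 < L" "2 \<le> ln L" and d: "2 \<le> d" "real d ^ 2 \<le> L / (2 * ln L)"
  shows "2 ^ d * d * fact d * L ^ 2 * exp (- L / d) \<le> L ^ 2 * exp (- sqrt L)"
proof -
  have "real d ^ 2 * (2 * ln L) \<le> L"
    using d(2) L(2) by (simp add: le_divide_eq)
  moreover have "4 * real d ^ 2 \<le> (2 * ln L) * real d ^ 2"
    using L(2) by (intro mult_right_mono) auto
  ultimately have "4 * real d ^ 2 \<le> L" "real d ^ 2 * ln L \<le> L / 2"
    by (simp_all add: mult.commute)
  then have "2 ^ d * real d * fact d \<le> L ^ d" "L ^ d * exp (- L / d) \<le> exp (- sqrt L)"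
    using two_power_mult_fact_le[OF d(1)] power_mult_exp_neg_div_le[OF L(1)] d(1) by auto
  then have "(2 ^ d * d * fact d) * (L ^ 2 * exp (- L / d)) \<le> L ^ 2 * (L ^ d * exp (- L / d))"
    using mult_right_mono[of "2 ^ d * d * fact d" "L ^ d" "L ^ 2 * exp (- L / d)"] by (simp add: ac_simps)
  also have "\<dots> \<le> L ^ 2 * exp (- sqrt L)"
    using \<open>L ^ d * exp (- L / d) \<le> exp (- sqrt L)\<close> by (intro mult_left_mono) auto
  finally show ?thesis
    by (simp add: ac_simps)
qed

section \<open>Probability that all short sums are present\<close>

text \<open>\<open>V\<close> stands for the group \<open>Z\<^sub>2\<^sup>n\<close> of order \<open>N = exp L\<close>; the counting below uses
  no structure of \<open>V\<close> beyond taking \<open>xor_sum\<close>s of subfamilies.\<close>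

locale short_sums_setup =
  fixes V :: "'a set set" and L \<epsilon> p :: real and d :: nat
  assumes finite_V: "finite V"
    and card_V: "real (card V) = exp L"
    and eps: "0 < \<epsilon>"
    and L: "0 < L" "2 \<le> ln L"
    and d: "2 \<le> d" "real d ^ 2 \<le> L / (2 * ln L)"
    and p: "0 \<le> p" "p \<le> 1"
    and p_pow: "p ^ d \<le> fact d * (1 - \<epsilon>) * L / exp L ^ (d - 1)"
    and small: "L\<^sup>2 * exp (- sqrt L) \<le> 1 / 4"
begin

definition no_short_sum :: "'a set \<Rightarrow> 'a set set \<Rightarrow> bool" where
  "no_short_sum g S \<longleftrightarrow> (\<forall>A\<in>short_xor_representations V d g. \<not> A \<subseteq> S)"

definition top_mean :: "'a set \<Rightarrow> real" where
  "top_mean g = real (card (xor_representations V d g)) * p ^ d"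

definition lower_mean :: "'a set \<Rightarrow> real" where
  "lower_mean g = (\<Sum>k=1..<d. real (card (xor_representations V k g)) * p ^ k)"

text \<open>\<open>\<theta>\<close> bounds the expected number of \<open>i\<close>-term representations with \<open>i < d\<close>
  (\<open>lower_term_le_\<theta>\<close>); all error terms are at most \<open>\<Phi> \<le> L\<^sup>2 exp (- sqrt L)\<close>.\<close>

definition \<theta> :: real where
  "\<theta> = fact d * L * exp (- L / d)"

definition \<Phi> :: real where
  "\<Phi> = 2 ^ d * real d * fact d * L\<^sup>2 * exp (- L / d)"

lemma L_ge_1: "1 \<le> L"
proof -
  have "1 \<le> exp (ln L)"
    using L by (subst one_le_exp_iff) linarith
  then show ?thesis
    using L by simp
qed

lemma exp_L_ge_2: "2 \<le> exp L"
  using L_ge_1 exp_ge_add_one_self[of L] by linarith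

lemma one_minus_\<epsilon>_mult_L_le: "(1 - \<epsilon>) * L \<le> L"
  using eps L by (simp add: algebra_simps)

lemma \<theta>_nonneg: "0 \<le> \<theta>"
  unfolding \<theta>_def using L by simp

lemma lower_term_le_\<theta>:
  assumes "1 \<le> i" "i < d"
  shows "real (card V) ^ (i - 1) / fact i * p ^ i \<le> \<theta>"
proof -
  have "fact d * (1 - \<epsilon>) * L / exp L ^ (d - 1) \<le> fact d * L / exp L ^ (d - 1)"
    using mult_left_mono[OF one_minus_\<epsilon>_mult_L_le, of "fact d"]
    by (intro divide_right_mono) (simp_all add: mult.assoc)
  then show ?thesis
    unfolding \<theta>_def card_V using lower_order_term_le[OF refl L_ge_1 p(1) _ assms] p_pow by simp
qed

lemma card_xor_representations_term_le_\<theta>: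
  assumes "1 \<le> k" "k < d"
  shows "real (card (xor_representations V k g)) * p ^ k \<le> \<theta>"
proof (rule order_trans[OF _ lower_term_le_\<theta>[OF assms]])
  show "real (card (xor_representations V k g)) * p ^ k \<le> real (card V) ^ (k - 1) / fact k * p ^ k"
    using card_xor_representations_le[OF finite_V assms(1)] p by (intro mult_right_mono) auto
qed

lemma \<Phi>_le: "\<Phi> \<le> L\<^sup>2 * exp (- sqrt L)"
  unfolding \<Phi>_def using overlap_factor_le[OF L d] by simp

lemma \<Phi>_eq: "\<Phi> = 2 ^ d * real d * L * \<theta>"
  unfolding \<Phi>_def \<theta>_def by (simp add: power2_eq_square)

lemma \<theta>_bounds: "\<theta> * L \<le> \<Phi>" "real d * \<theta> \<le> \<Phi>" "2 ^ d * L * \<theta> \<le> \<Phi>"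
proof -
  have "1 \<le> (2::real) ^ d" "1 \<le> real d"
    using d by auto
  then have "1 \<le> (2::real) ^ d * real d" "1 \<le> (2::real) ^ d * L" "1 \<le> real d"
    using L_ge_1 mult_mono[of 1 "2 ^ d" 1 "real d"] mult_mono[of 1 "2 ^ d" 1 L] by auto
  moreover have "0 \<le> \<theta> * L" "0 \<le> real d * \<theta>" "0 \<le> 2 ^ d * L * \<theta>"
    using \<theta>_nonneg L_ge_1 by auto
  ultimately have "1 * (\<theta> * L) \<le> (2 ^ d * real d) * (\<theta> * L)"
      "1 * (real d * \<theta>) \<le> (2 ^ d * L) * (real d * \<theta>)" "1 * (2 ^ d * L * \<theta>) \<le> real d * (2 ^ d * L * \<theta>)"
    by (intro mult_right_mono; simp)+
  then show "\<theta> * L \<le> \<Phi>" "real d * \<theta> \<le> \<Phi>" "2 ^ d * L * \<theta> \<le> \<Phi>"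
    unfolding \<Phi>_eq by (simp_all add: ac_simps)
qed

lemma p_le_\<theta>: "p \<le> \<theta>"
  using lower_term_le_\<theta>[of 1] d by simp

lemma pL_le_\<Phi>: "p * L \<le> \<Phi>"
  using p_le_\<theta> L_ge_1 \<theta>_bounds(1) mult_right_mono[of p \<theta> L] by linarith

lemma p_le_half: "p \<le> 1 / 2"
proof -
  have "\<theta> \<le> \<theta> * L"
    using \<theta>_nonneg L_ge_1 by (simp add: mult_le_cancel_left1)
  then show ?thesis
    using p_le_\<theta> \<theta>_bounds(1) \<Phi>_le small by linarith
qed

lemma top_mean_le: "top_mean g \<le> (1 - \<epsilon>) * L"
proof -
  have "top_mean g \<le> exp L ^ (d - 1) / fact d * p ^ d"
    unfolding top_mean_def using card_xor_representations_le[OF finite_V, of d g] d p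
    by (intro mult_right_mono) (auto simp: card_V)
  also have "\<dots> \<le> exp L ^ (d - 1) / fact d * (fact d * (1 - \<epsilon>) * L / exp L ^ (d - 1))"
    using p_pow by (intro mult_left_mono) auto
  also have "\<dots> = (1 - \<epsilon>) * L"
    by simp
  finally show ?thesis .
qed

lemma top_mean_le_L: "top_mean g \<le> L"
  using top_mean_le[of g] one_minus_\<epsilon>_mult_L_le by linarith

lemma lower_mean_nonneg: "0 \<le> lower_mean g"
  unfolding lower_mean_def using p by (intro sum_nonneg) simp

lemma lower_mean_le_\<Phi>: "lower_mean g \<le> \<Phi>"
proof -
  have "lower_mean g \<le> (\<Sum>k=1..<d. \<theta>)"
    unfolding lower_mean_def by (intro sum_mono card_xor_representations_term_le_\<theta>) auto
  also have "\<dots> \<le> real d * \<theta>"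
    using \<theta>_nonneg by (simp add: mult_right_mono)
  finally show ?thesis
    using \<theta>_bounds(2) by linarith
qed

lemma janson_mu_short_xor_representations_split:
  "g \<noteq> {} \<Longrightarrow> janson_mu p (short_xor_representations V d g) = top_mean g + lower_mean g"
proof -
  have "{1..d} = insert d {1..<d}"
    using d by auto
  then show "g \<noteq> {} \<Longrightarrow> ?thesis"
    unfolding top_mean_def lower_mean_def by (simp add: janson_mu_short_xor_representations[OF finite_V])
qed

lemma short_xor_representations_subset_Pow: "short_xor_representations V d g \<subseteq> Pow V"
  unfolding short_xor_representations_def by auto

lemma prob_no_short_sum_ge_exp_mean:
  assumes "g \<noteq> {}"
  shows "exp (- (1 + 2 * p) * (top_mean g + lower_mean g)) \<le> subset_prob p V (no_short_sum g)"
proof -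
  have "{} \<notin> short_xor_representations V d g"
    using assms unfolding short_xor_representations_def by auto
  from exp_neg_janson_mu_le_prod[OF finite_V short_xor_representations_subset_Pow[of g] this p(1) p_le_half]
  have "exp (- (1 + 2 * p) * (top_mean g + lower_mean g))
      \<le> (\<Prod>A\<in>short_xor_representations V d g. 1 - p ^ card A)"
    unfolding janson_mu_short_xor_representations_split[OF assms] .
  also have "\<dots> \<le> subset_prob p V (no_short_sum g)"
    unfolding no_short_sum_def
    by (intro subset_prob_avoids_ge_prod finite_V p finite_short_xor_representations
        short_xor_representations_subset_Pow)
  finally show ?thesis .
qed

lemma prob_no_short_sum_ge:
  assumes "g \<noteq> {}"
  shows "exp (- (1 - \<epsilon>) * L - 4 * \<Phi>) \<le> subset_prob p V (no_short_sum g)"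
proof -
  have "p * top_mean g \<le> p * L"
    using top_mean_le_L[of g] p(1) by (rule mult_left_mono)
  moreover have "(1 + 2 * p) * lower_mean g \<le> 2 * lower_mean g"
    using p_le_half lower_mean_nonneg by (intro mult_right_mono) auto
  ultimately have "(1 + 2 * p) * (top_mean g + lower_mean g) \<le> (1 - \<epsilon>) * L + 4 * \<Phi>"
    using top_mean_le[of g] pL_le_\<Phi> lower_mean_le_\<Phi>[of g] by (simp add: algebra_simps)
  then have "exp (- ((1 - \<epsilon>) * L + 4 * \<Phi>)) \<le> exp (- ((1 + 2 * p) * (top_mean g + lower_mean g)))"
    by simp
  also have "\<dots> \<le> subset_prob p V (no_short_sum g)"
    using prob_no_short_sum_ge_exp_mean[OF assms] by (simp only: minus_mult_left)
  finally show ?thesis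
    by (simp add: algebra_simps)
qed

lemma janson_Delta_xor_representations_le:
  assumes "g \<noteq> h"
  shows "janson_Delta p (xor_representations V d g \<union> xor_representations V d h) \<le> 4 * \<Phi>"
proof -
  define F where "F = xor_representations V d g \<union> xor_representations V d h"
  have disj: "xor_representations V d g \<inter> xor_representations V d h = {}"
    using assms unfolding xor_representations_def by auto
  have fin: "finite (xor_representations V d k)" for k
    by (rule finite_xor_representations[OF finite_V])
  have overlap: "(\<Sum>B\<in>F - {A}. of_bool (A \<inter> B \<noteq> {}) * p ^ card (A \<union> B)) \<le> 2 * (2 ^ d * p ^ d * \<theta>)"
    if "A \<in> F" for A
  proof -
    have A: "A \<subseteq> V" "card A = d"
      using that unfolding F_def xor_representations_def by auto
    define w where "w = (\<lambda>B. of_bool (A \<inter> B \<noteq> {}) * p ^ card (A \<union> B))"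
    have "F - {A} = (xor_representations V d g - {A}) \<union> (xor_representations V d h - {A})"
      unfolding F_def by auto
    moreover have "(xor_representations V d g - {A}) \<inter> (xor_representations V d h - {A}) = {}"
      using disj by blast
    ultimately have "(\<Sum>B\<in>F - {A}. w B)
        = (\<Sum>B\<in>xor_representations V d g - {A}. w B) + (\<Sum>B\<in>xor_representations V d h - {A}. w B)"
      using fin by (simp add: sum.union_disjoint)
    then have "(\<Sum>B\<in>F - {A}. of_bool (A \<inter> B \<noteq> {}) * p ^ card (A \<union> B))
        = (\<Sum>B\<in>xor_representations V d g - {A}. of_bool (A \<inter> B \<noteq> {}) * p ^ card (A \<union> B))
        + (\<Sum>B\<in>xor_representations V d h - {A}. of_bool (A \<inter> B \<noteq> {}) * p ^ card (A \<union> B))"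
      unfolding w_def .
    also have "\<dots> \<le> 2 ^ d * p ^ d * \<theta> + 2 ^ d * p ^ d * \<theta>"
      using xor_representations_overlap_le[OF finite_V A p(1) \<theta>_nonneg lower_term_le_\<theta>, of g]
        xor_representations_overlap_le[OF finite_V A p(1) \<theta>_nonneg lower_term_le_\<theta>, of h]
      by (rule add_mono)
    finally show ?thesis
      by linarith
  qed
  have card_F: "real (card F) * p ^ d = top_mean g + top_mean h"
    using card_Un_disjoint[OF fin fin disj] unfolding F_def top_mean_def by (simp add: distrib_right)
  have "janson_Delta p F \<le> (\<Sum>A\<in>F. 2 * (2 ^ d * p ^ d * \<theta>))"
    unfolding janson_Delta_def by (intro sum_mono overlap)
  also have "\<dots> = (top_mean g + top_mean h) * (2 * 2 ^ d * \<theta>)"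
    by (simp flip: card_F)
  also have "\<dots> \<le> (2 * L) * (2 * 2 ^ d * \<theta>)"
    using top_mean_le_L[of g] top_mean_le_L[of h] \<theta>_nonneg by (intro mult_right_mono) auto
  also have "\<dots> \<le> 4 * \<Phi>"
    using \<theta>_bounds(3) by (simp add: ac_simps)
  finally show ?thesis
    unfolding F_def .
qed

lemma prob_both_no_short_sum_le_exp:
  assumes "g \<noteq> h"
  shows "subset_prob p V (\<lambda>S. no_short_sum g S \<and> no_short_sum h S)
    \<le> exp (- (top_mean g + top_mean h) + 4 * \<Phi>)"
proof -
  define F where "F = xor_representations V d g \<union> xor_representations V d h"
  have fin: "finite (xor_representations V d k)" for k
    by (rule finite_xor_representations[OF finite_V])
  have "janson_mu p F = top_mean g + top_mean h"
    using fin assms unfolding F_def janson_mu_def top_mean_def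
    by (subst sum.union_disjoint) (auto simp: xor_representations_def)
  have "subset_prob p V (\<lambda>S. no_short_sum g S \<and> no_short_sum h S) \<le> subset_prob p V (\<lambda>S. \<forall>A\<in>F. \<not> A \<subseteq> S)"
    using p by (intro subset_expectation_mono)
      (auto simp: F_def no_short_sum_def short_xor_representations_def xor_representations_def)
  also have "\<dots> \<le> exp (- janson_mu p F + janson_Delta p F)"
    using fin by (intro janson_inequality finite_V p) (auto simp: F_def xor_representations_def)
  also have "\<dots> \<le> exp (- (top_mean g + top_mean h) + 4 * \<Phi>)"
    using \<open>janson_mu p F = top_mean g + top_mean h\<close> janson_Delta_xor_representations_le[OF assms]
    unfolding F_def by simp
  finally show ?thesis .
qed

lemma prob_both_no_short_sum_le:
  assumes "g \<noteq> {}" "h \<noteq> {}" "g \<noteq> h"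
  shows "subset_prob p V (\<lambda>S. no_short_sum g S \<and> no_short_sum h S)
    \<le> exp (12 * \<Phi>) * subset_prob p V (no_short_sum g) * subset_prob p V (no_short_sum h)"
proof -
  have exponent: "- (top_mean g + top_mean h) + 4 * \<Phi>
      \<le> 12 * \<Phi> - (1 + 2 * p) * (top_mean g + lower_mean g) - (1 + 2 * p) * (top_mean h + lower_mean h)"
  proof -
    have top: "p * top_mean k \<le> p * L" for k
      using top_mean_le_L[of k] p(1) by (rule mult_left_mono)
    have lower: "(1 + 2 * p) * lower_mean k \<le> 2 * lower_mean k" for k
      using p p_le_half lower_mean_nonneg[of k] by (intro mult_right_mono) auto
    show ?thesis
      using top[of g] top[of h] lower[of g] lower[of h] pL_le_\<Phi> lower_mean_le_\<Phi>[of g]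
        lower_mean_le_\<Phi>[of h]
      by (simp add: algebra_simps)
  qed
  have "subset_prob p V (\<lambda>S. no_short_sum g S \<and> no_short_sum h S)
      \<le> exp (- (top_mean g + top_mean h) + 4 * \<Phi>)"
    by (rule prob_both_no_short_sum_le_exp[OF assms(3)])
  also have "\<dots> \<le> exp (12 * \<Phi> - (1 + 2 * p) * (top_mean g + lower_mean g)
      - (1 + 2 * p) * (top_mean h + lower_mean h))"
    using exponent by simp
  also have "\<dots> = exp (12 * \<Phi>) * exp (- (1 + 2 * p) * (top_mean g + lower_mean g))
      * exp (- (1 + 2 * p) * (top_mean h + lower_mean h))"
    by (simp add: exp_add[symmetric] exp_diff exp_minus field_simps)
  also have "\<dots> \<le> exp (12 * \<Phi>) * subset_prob p V (no_short_sum g) * subset_prob p V (no_short_sum h)"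
  proof -
    have "0 \<le> subset_prob p V (no_short_sum g)"
      by (rule subset_expectation_nonneg[OF p]) simp
    then show ?thesis
      using prob_no_short_sum_ge_exp_mean[OF assms(1)] prob_no_short_sum_ge_exp_mean[OF assms(2)]
      by (intro mult_mono) auto
  qed
  finally show ?thesis .
qed

lemma expected_no_short_sum_ge:
  "exp (\<epsilon> * L - 4 * \<Phi>) / 2 \<le> (\<Sum>g\<in>V - {{}}. subset_prob p V (no_short_sum g))"
proof -
  have "card V - 1 \<le> card (V - {{}})"
    using diff_card_le_card_Diff[of "{{}}" V] by simp
  then have "exp L / 2 \<le> real (card (V - {{}}))"
    using exp_L_ge_2 card_V by linarith
  then have "exp L / 2 * exp (- (1 - \<epsilon>) * L - 4 * \<Phi>) \<le> real (card (V - {{}})) * exp (- (1 - \<epsilon>) * L - 4 * \<Phi>)"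
    by (rule mult_right_mono) simp
  also have "\<dots> = (\<Sum>g\<in>V - {{}}. exp (- (1 - \<epsilon>) * L - 4 * \<Phi>))"
    by simp
  also have "\<dots> \<le> (\<Sum>g\<in>V - {{}}. subset_prob p V (no_short_sum g))"
    by (intro sum_mono prob_no_short_sum_ge) auto
  finally show ?thesis
    by (simp add: exp_add[symmetric] algebra_simps)
qed

theorem prob_all_short_sums_le:
  "subset_prob p V (\<lambda>S. \<forall>g\<in>V - {{}}. \<not> no_short_sum g S)
    \<le> 2 * exp (4 * (L\<^sup>2 * exp (- sqrt L)) - \<epsilon> * L) + exp (12 * (L\<^sup>2 * exp (- sqrt L))) - 1"
proof -
  define M where "M = (\<Sum>g\<in>V - {{}}. subset_prob p V (no_short_sum g))"
  have "0 < exp (\<epsilon> * L - 4 * \<Phi>) / 2"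
    by simp
  then have "0 < M"
    using expected_no_short_sum_ge unfolding M_def by linarith
  have "subset_prob p V (\<lambda>S. \<forall>g\<in>V - {{}}. \<not> no_short_sum g S) \<le> 1 / M + exp (12 * \<Phi>) - 1"
    using finite_V p prob_both_no_short_sum_le \<open>0 < M\<close> unfolding M_def
    by (intro second_moment_bound) auto
  moreover have "1 / M \<le> 1 / (exp (\<epsilon> * L - 4 * \<Phi>) / 2)"
    using expected_no_short_sum_ge \<open>0 < M\<close> unfolding M_def by (intro divide_left_mono) auto
  then have "1 / M \<le> 2 * exp (4 * \<Phi> - \<epsilon> * L)"
    by (simp add: exp_diff field_simps)
  moreover have "exp (4 * \<Phi> - \<epsilon> * L) \<le> exp (4 * (L\<^sup>2 * exp (- sqrt L)) - \<epsilon> * L)"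
    "exp (12 * \<Phi>) \<le> exp (12 * (L\<^sup>2 * exp (- sqrt L)))"
    using \<Phi>_le by simp_all
  ultimately show ?thesis
    by linarith
qed

end

section \<open>Random Cayley graphs of Z_2^n\<close>

lemma cayley_model_prob_Z2n: "cayley_model_prob (Z2n n) p P = subset_prob p (Pow {..<n}) P"
proof -
  have carrier: "{S. S \<subseteq> carrier (Z2n n) \<and> P S} = {S \<in> Pow (Pow {..<n}). P S}"
    by (auto simp: Z2n_carrier)
  show ?thesis
    unfolding cayley_model_prob_def carrier unfolding subset_expectation_def Z2n_carrier
    by (subst sum.inter_filter) (simp, rule sum.cong, auto)
qed

definition diameter_error :: "real \<Rightarrow> real \<Rightarrow> real" where
  "diameter_error \<epsilon> L =
     2 * exp (4 * (L\<^sup>2 * exp (- sqrt L)) - \<epsilon> * L) + exp (12 * (L\<^sup>2 * exp (- sqrt L))) - 1"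

lemma prob_Z2n_diam_le_le:
  fixes n d :: nat and p \<epsilon> L :: real
  defines "L \<equiv> real n * ln 2"
  assumes "0 < \<epsilon>" and "0 < L" "2 \<le> ln L" "L\<^sup>2 * exp (- sqrt L) \<le> 1 / 4"
    and "2 \<le> d" "real d ^ 2 \<le> L / (2 * ln L)" and "0 \<le> p" "p \<le> 1"
    and "p ^ d \<le> fact d * (1 - \<epsilon>) * L / (2 ^ n) ^ (d - 1)"
  shows "cayley_model_prob (Z2n n) p (\<lambda>S. cayley_diam_le (Z2n n) S d) \<le> diameter_error \<epsilon> L"
proof -
  have "exp L = 2 ^ n"
    unfolding L_def by (simp add: exp_of_nat_mult)
  moreover have "real (card (Pow {..<n})) = 2 ^ n"
    by (simp add: card_Pow)
  ultimately interpret short_sums_setup "Pow {..<n}" L \<epsilon> p d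
    using assms by unfold_locales simp_all
  have "cayley_model_prob (Z2n n) p (\<lambda>S. cayley_diam_le (Z2n n) S d)
      \<le> subset_prob p (Pow {..<n}) (\<lambda>S. \<forall>g\<in>Pow {..<n} - {{}}. \<not> no_short_sum g S)"
    unfolding cayley_model_prob_Z2n using p
  proof (intro subset_expectation_mono)
    fix S assume S: "S \<subseteq> Pow {..<n}"
    have "\<forall>g\<in>Pow {..<n} - {{}}. \<not> no_short_sum g S" if diam: "cayley_diam_le (Z2n n) S d"
    proof
      fix g assume g: "g \<in> Pow {..<n} - {{}}"
      then obtain A where "A \<subseteq> S" "card A \<le> d" "xor_sum A = g"
        using Z2n_diam_le_imp_short_xor_representation[OF S diam] by blast
      then show "\<not> no_short_sum g S"
        using S by (auto simp: no_short_sum_def short_xor_representations_def)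
    qed
    then show "of_bool (cayley_diam_le (Z2n n) S d)
        \<le> (of_bool (\<forall>g\<in>Pow {..<n} - {{}}. \<not> no_short_sum g S) :: real)"
      by auto
  qed auto
  also have "\<dots> \<le> diameter_error \<epsilon> L"
    unfolding diameter_error_def by (rule prob_all_short_sums_le)
  finally show ?thesis .
qed

lemma eventually_Z2n_large:
  "eventually (\<lambda>n. 0 < real n * ln 2 \<and> 2 \<le> ln (real n * ln 2)
     \<and> (real n * ln 2)\<^sup>2 * exp (- sqrt (real n * ln 2)) \<le> 1 / 4) sequentially"
proof -
  have "eventually (\<lambda>n. 0 < real n * ln 2) sequentially"
    using eventually_gt_at_top[of 0] by eventually_elim simp
  moreover have "filterlim (\<lambda>n::nat. ln (real n * ln 2)) at_top sequentially"
    by real_asymp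
  then have "eventually (\<lambda>n. 2 \<le> ln (real n * ln 2)) sequentially"
    by (simp add: filterlim_at_top)
  moreover have "((\<lambda>n::nat. (real n * ln 2)\<^sup>2 * exp (- sqrt (real n * ln 2))) \<longlongrightarrow> 0) sequentially"
    by real_asymp
  then have "eventually (\<lambda>n. (real n * ln 2)\<^sup>2 * exp (- sqrt (real n * ln 2)) < 1 / 4) sequentially"
    by (rule order_tendstoD) simp
  ultimately show ?thesis
    by eventually_elim simp
qed

lemma diameter_error_tendsto_zero:
  "0 < \<epsilon> \<Longrightarrow> ((\<lambda>n::nat. diameter_error \<epsilon> (real n * ln 2)) \<longlongrightarrow> 0) sequentially"
  unfolding diameter_error_def by real_asymp

lemma real_sq_le_of_le_mult_sqrt:
  fixes x X \<gamma> :: real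
  assumes "0 \<le> x" "0 < \<gamma>" "\<gamma> < 1" "x \<le> (1 - \<gamma>) * sqrt X"
  shows "x\<^sup>2 \<le> X"
proof -
  have "0 \<le> sqrt X"
  proof (rule ccontr)
    assume "\<not> 0 \<le> sqrt X"
    then have "(1 - \<gamma>) * sqrt X < 0"
      using assms(3) by (simp add: mult_pos_neg)
    then show False
      using assms(1,4) by linarith
  qed
  then have "x \<le> sqrt X"
    using assms mult_right_mono[of "1 - \<gamma>" 1 "sqrt X"] by simp
  then have "x\<^sup>2 \<le> (sqrt X)\<^sup>2"
    using assms(1) by (rule power_mono)
  then show ?thesis
    using \<open>0 \<le> sqrt X\<close> by simp
qed

lemma power_le_of_le_root: "0 < n \<Longrightarrow> 0 \<le> p \<Longrightarrow> p \<le> root n x \<Longrightarrow> p ^ n \<le> x"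
  using real_root_le_iff[of n "p ^ n" x] real_root_power_cancel[of n p] by simp

theorem theorem4:
  fixes \<epsilon> \<gamma> :: real
  assumes "\<epsilon> > 0" and "0 < \<gamma>" and "\<gamma> < 1"
  shows "\<forall>\<delta>>0. \<exists>n0::nat. \<forall>n\<ge>n0. \<forall>(d::nat) (p::real).
           (let N = (2::real) ^ n in
              2 \<le> d \<and> real d \<le> (1 - \<gamma>) * sqrt (ln N / (2 * ln (ln N))) \<and>
              0 \<le> p \<and> p \<le> 1 \<and>
              p \<le> root d (fact d * (1 - \<epsilon>) * ln N / N ^ (d - 1)))
           \<longrightarrow> cayley_model_prob (Z2n n) p (\<lambda>S. cayley_diam_le (Z2n n) S d) < \<delta>"
proof (intro allI impI)
  fix \<delta> :: real
  assume "0 < \<delta>"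
  obtain n0 where n0: "\<And>n. n0 \<le> n \<Longrightarrow> 0 < real n * ln 2 \<and> 2 \<le> ln (real n * ln 2)
      \<and> (real n * ln 2)\<^sup>2 * exp (- sqrt (real n * ln 2)) \<le> 1 / 4
      \<and> diameter_error \<epsilon> (real n * ln 2) < \<delta>"
    using eventually_conj[OF eventually_Z2n_large
        order_tendstoD(2)[OF diameter_error_tendsto_zero[OF assms(1)] \<open>0 < \<delta>\<close>]]
    unfolding eventually_sequentially by blast
  have "cayley_model_prob (Z2n n) p (\<lambda>S. cayley_diam_le (Z2n n) S d) < \<delta>"
    if "n0 \<le> n" "2 \<le> d" "real d \<le> (1 - \<gamma>) * sqrt (real n * ln 2 / (2 * ln (real n * ln 2)))"
      "0 \<le> p" "p \<le> 1" "p \<le> root d (fact d * (1 - \<epsilon>) * (real n * ln 2) / (2 ^ n) ^ (d - 1))"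
    for n d p
    using that n0[OF that(1)] assms
    by (intro le_less_trans[OF prob_Z2n_diam_le_le])
      (auto intro: real_sq_le_of_le_mult_sqrt power_le_of_le_root)
  then show "\<exists>n0::nat. \<forall>n\<ge>n0. \<forall>(d::nat) (p::real).
      (let N = (2::real) ^ n in
         2 \<le> d \<and> real d \<le> (1 - \<gamma>) * sqrt (ln N / (2 * ln (ln N))) \<and> 0 \<le> p \<and> p \<le> 1 \<and>
         p \<le> root d (fact d * (1 - \<epsilon>) * ln N / N ^ (d - 1)))
      \<longrightarrow> cayley_model_prob (Z2n n) p (\<lambda>S. cayley_diam_le (Z2n n) S d) < \<delta>"
    by (auto simp: Let_def ln_realpow)
qed

end
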